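(* Let $\rho_r\in(0,1)$, $\rho_w\in(0,1/2)$, and let $C_n\subseteq\{0,1\}^n$ be a (stochastic) code of rate $R$ that, over the $(\rho_r,\rho_w)$ adversarial wiretap channel, has decoding error at most $\delta_n$ against every adversary strategy and normalized equivocation $\eta_n=\Delta(C_n)/n$. Then for every sufficiently small $\xi>0$, over the $(\rho_r-\xi,\rho_w-\xi)$ random wiretap channel the code $C_n$ has decoding error at most $\delta_n+\exp(-\Omega(n))$ and normalized equivocation $H(\mathbf S\mid\mathbf Z)/n\ge \eta_n\bigl(1-\exp(-\Omega(n))\bigr)$, where the implied constants depend on $\rho_r,\rho_w,\xi$.
   Context: The $(\rho_r,\rho_w)$ adversarial wiretap channel: the transmitted codeword $x\in\{0,1\}^n$ encodes message $\mathbf S$; the adversary picks $\mathscr S\subseteq[n]$, $|\mathscr S|=\rho_r n$, sees $\mathbf V(\mathscr S)\in\{0,1,?\}^n$ (equal to $x_i$ on $\mathscr S$ and $?$ elsewhere), and adds an error of Hamming weight at most $\rho_w n$ whose distribution depends only on the code and the view; the receiver uses nearest-neighbor decoding. Decoding error is $\Pr[\hat{\mathbf S}\ne\mathbf S]$. With $\mathbf S$ uniform, the equivocation is $\Delta(C_n)=\min_{|\mathscr S|=\rho_r n}H(\mathbf S\mid\mathbf V(\mathscr S))$. The $(a,b)$ random wiretap channel sends $x$ through a binary erasure channel $\mathrm{BEC}(1-a)$ (each coordinate independently erased with probability $1-a$) to the eavesdropper, producing $\mathbf Z\in\{0,1,?\}^n$, and through a binary symmetric channel $\mathrm{BSC}(b)$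 to the receiver; its normalized equivocation is $H(\mathbf S\mid\mathbf Z)/n$ with $\mathbf S$ uniform. *)

theory Defs
  imports "HOL-Probability.Probability"
begin

definition hamming :: "bool list \<Rightarrow> bool list \<Rightarrow> nat" where
  "hamming x y = card {i. i < length x \<and> i < length y \<and> x ! i \<noteq> y ! i}"

definition weight :: "bool list \<Rightarrow> nat" where
  "weight e = card {i. i < length e \<and> e ! i}"

definition xor_word :: "bool list \<Rightarrow> bool list \<Rightarrow> bool list" where
  "xor_word x e = map2 (\<noteq>) x e"

definition is_code :: "nat \<Rightarrow> nat \<Rightarrow> (nat \<Rightarrow> bool list pmf) \<Rightarrow> bool" where
  "is_code n K enc \<longleftrightarrow> K \<ge> 1 \<and> (\<forall>m<K. set_pmf (enc m) \<subseteq> {x. length x = n})"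

definition nn_decoder :: "nat \<Rightarrow> nat \<Rightarrow> (nat \<Rightarrow> bool list pmf) \<Rightarrow> (bool list \<Rightarrow> nat) \<Rightarrow> bool" where
  "nn_decoder n K enc dec \<longleftrightarrow>
     (\<forall>y. length y = n \<longrightarrow> dec y < K \<and>
        (\<exists>x\<in>set_pmf (enc (dec y)). \<forall>m<K. \<forall>x'\<in>set_pmf (enc m). hamming x y \<le> hamming x' y))"

definition msg_pmf :: "nat \<Rightarrow> nat pmf" where
  "msg_pmf K = pmf_of_set {..<K}"

definition cond_entropy :: "('a \<times> 'b) pmf \<Rightarrow> real" where
  "cond_entropy p = - (\<Sum>ab\<in>set_pmf p.
      pmf p ab * log 2 (pmf p ab / pmf (map_pmf snd p) (snd ab)))"

text \<open>View of the adversary reading the positions in S: Some (x_i) on S, None (= ?) elsewhere.\<close>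
definition view :: "nat set \<Rightarrow> bool list \<Rightarrow> bool option list" where
  "view S x = map (\<lambda>i. if i \<in> S then Some (x ! i) else None) [0..<length x]"

definition adv_strategy :: "real \<Rightarrow> real \<Rightarrow> nat \<Rightarrow> nat set \<Rightarrow> (bool option list \<Rightarrow> bool list pmf) \<Rightarrow> bool" where
  "adv_strategy \<rho>r \<rho>w n S err \<longleftrightarrow>
     S \<subseteq> {..<n} \<and> card S = nat \<lfloor>\<rho>r * real n\<rfloor> \<and>
     (\<forall>v. \<forall>e\<in>set_pmf (err v). length e = n \<and> real (weight e) \<le> \<rho>w * real n)"

definition adv_error :: "nat \<Rightarrow> (nat \<Rightarrow> bool list pmf) \<Rightarrow> (bool list \<Rightarrow> nat) \<Rightarrow>
    nat set \<Rightarrow> (bool option list \<Rightarrow> bool list pmf) \<Rightarrow> real" where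
  "adv_error K enc dec S err = measure_pmf.prob
     (do { m \<leftarrow> msg_pmf K; x \<leftarrow> enc m; e \<leftarrow> err (view S x);
           return_pmf (m, dec (xor_word x e)) })
     {(m, m'). m' \<noteq> m}"

definition adv_view_joint :: "nat \<Rightarrow> (nat \<Rightarrow> bool list pmf) \<Rightarrow> nat set \<Rightarrow> (nat \<times> bool option list) pmf" where
  "adv_view_joint K enc S = do { m \<leftarrow> msg_pmf K; x \<leftarrow> enc m; return_pmf (m, view S x) }"

definition adv_equivocation :: "real \<Rightarrow> nat \<Rightarrow> nat \<Rightarrow> (nat \<Rightarrow> bool list pmf) \<Rightarrow> real" where
  "adv_equivocation \<rho>r n K enc =
     Min {cond_entropy (adv_view_joint K enc S) | S. S \<subseteq> {..<n} \<and> card S = nat \<lfloor>\<rho>r * real n\<rfloor>}"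

text \<open>BEC(1-a): each coordinate independently kept with probability a, else erased.\<close>
primrec bec_pmf :: "real \<Rightarrow> bool list \<Rightarrow> bool option list pmf" where
  "bec_pmf a [] = return_pmf []"
| "bec_pmf a (b # xs) = do { k \<leftarrow> bernoulli_pmf a; zs \<leftarrow> bec_pmf a xs;
                            return_pmf ((if k then Some b else None) # zs) }"

primrec bsc_pmf :: "real \<Rightarrow> bool list \<Rightarrow> bool list pmf" where
  "bsc_pmf p [] = return_pmf []"
| "bsc_pmf p (b # xs) = do { f \<leftarrow> bernoulli_pmf p; ys \<leftarrow> bsc_pmf p xs;
                            return_pmf ((b \<noteq> f) # ys) }"

definition rand_error :: "nat \<Rightarrow> (nat \<Rightarrow> bool list pmf) \<Rightarrow> (bool list \<Rightarrow> nat) \<Rightarrow> real \<Rightarrow> real" where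
  "rand_error K enc dec b = measure_pmf.prob
     (do { m \<leftarrow> msg_pmf K; x \<leftarrow> enc m; y \<leftarrow> bsc_pmf b x; return_pmf (m, dec y) })
     {(m, m'). m' \<noteq> m}"

definition rand_equivocation :: "nat \<Rightarrow> (nat \<Rightarrow> bool list pmf) \<Rightarrow> real \<Rightarrow> real" where
  "rand_equivocation K enc a = cond_entropy
     (do { m \<leftarrow> msg_pmf K; x \<leftarrow> enc m; z \<leftarrow> bec_pmf a x; return_pmf (m, z) })"

end

theory Submission
  imports Defs
begin

text \<open>Both channels of the random wiretap channel are driven by a random set of coordinates in
  which each position is selected independently: the eavesdropper reads the selected positions
  and the binary symmetric channel flips them. By Hoeffding's inequality the selected set exceeds
  the adversary's budget only with probability \<open>exp (-2 \<xi>\<^sup>2 n)\<close>. Below the budget, the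
  flip pattern is an admissible adversarial error that ignores the view, which bounds the decoding
  error; and the erasure view is a coarsening of an adversarial view of full budget, so by data
  processing and concavity of conditional entropy under mixing, the random equivocation is at
  least the adversarial one times the probability of staying below the budget.\<close>

section \<open>Conditional entropy\<close>

lemma log_sum_inequality:
  fixes a b :: "'i \<Rightarrow> real"
  assumes fin: "finite I" and ne: "I \<noteq> {}" and pos: "\<And>i. i \<in> I \<Longrightarrow> 0 < a i \<and> 0 < b i"
    and B: "sum b I \<le> B"
  shows "sum a I * log 2 (sum a I / B) \<le> (\<Sum>i\<in>I. a i * log 2 (a i / b i))"
proof -
  define A where "A = sum a I"
  define B0 where "B0 = sum b I"
  have "A > 0" "B0 > 0" unfolding A_def B0_def using fin ne pos by (auto intro!: sum_pos)
  have "A * log 2 (A / B) \<le> A * log 2 (A / B0)"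
    using \<open>A > 0\<close> \<open>B0 > 0\<close> B unfolding B0_def[symmetric]
    by (intro mult_left_mono) (auto intro!: divide_left_mono mult_pos_pos)
  also have "\<dots> = (\<Sum>i\<in>I. a i * log 2 (A / B0) + (a i - b i * (A / B0)) / ln 2)"
  proof -
    have "(\<Sum>i\<in>I. (a i - b i * (A / B0)) / ln 2) = (A - B0 * (A / B0)) / ln 2"
      unfolding A_def B0_def by (simp add: sum_divide_distrib[symmetric] sum_subtractf sum_distrib_right)
    with \<open>B0 > 0\<close> show ?thesis by (simp add: sum.distrib A_def sum_distrib_right)
  qed
  also have "\<dots> \<le> (\<Sum>i\<in>I. a i * log 2 (a i / b i))"
  proof (rule sum_mono)
    fix i assume "i \<in> I"
    with pos have "0 < a i" "0 < b i" by auto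
    define y where "y = (a i / b i) / (A / B0)"
    have "y > 0" unfolding y_def using \<open>0 < a i\<close> \<open>0 < b i\<close> \<open>A > 0\<close> \<open>B0 > 0\<close> by simp
    \<comment> \<open>the tangent-line bound \<open>ln y \<ge> 1 - 1/y\<close>; the linear terms it produces sum to zero\<close>
    have "1 - 1 / y \<le> ln y"
      using ln_le_minus_one[of "1 / y"] \<open>y > 0\<close> by (simp add: ln_div)
    hence "a i * (1 - 1 / y) / ln 2 \<le> a i * log 2 y"
      using \<open>0 < a i\<close> by (simp add: log_def divide_right_mono)
    moreover have "a i * (1 - 1 / y) = a i - b i * (A / B0)"
      unfolding y_def using \<open>0 < a i\<close> \<open>0 < b i\<close> \<open>A > 0\<close> \<open>B0 > 0\<close> by (simp add: field_simps)
    moreover have "log 2 (a i / b i) = log 2 (A / B0) + log 2 y"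
      unfolding y_def using \<open>0 < a i\<close> \<open>0 < b i\<close> \<open>A > 0\<close> \<open>B0 > 0\<close> by (simp add: log_divide log_mult)
    ultimately show "a i * log 2 (A / B0) + (a i - b i * (A / B0)) / ln 2 \<le> a i * log 2 (a i / b i)"
      by (simp add: distrib_left)
  qed
  finally show ?thesis unfolding A_def .
qed

lemma measure_pmf_finite_support:
  "finite (set_pmf p) \<Longrightarrow> measure_pmf.prob p A = sum (pmf p) (A \<inter> set_pmf p)"
  by (metis measure_Int_set_pmf measure_measure_pmf_finite finite_Int)

lemma pmf_bind_finite_support:
  "finite (set_pmf w) \<Longrightarrow> pmf (bind_pmf w P) x = (\<Sum>t\<in>set_pmf w. pmf w t * pmf (P t) x)"
  unfolding pmf_bind by (subst integral_measure_pmf_real[where A="set_pmf w"]) (auto simp: mult.commute)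

lemma pmf_le_pmf_map_snd: "pmf p (a, b) \<le> pmf (map_pmf snd p) b"
proof -
  have "pmf p (a, b) = measure_pmf.prob p {(a, b)}" by (simp add: measure_pmf_single)
  also have "\<dots> \<le> measure_pmf.prob p (snd -` {b})" by (intro measure_pmf.finite_measure_mono) auto
  finally show ?thesis by (simp add: pmf_map)
qed

lemma cond_entropy_nonneg:
  assumes "finite (set_pmf p)"
  shows "0 \<le> cond_entropy p"
proof -
  have "pmf p ab * log 2 (pmf p ab / pmf (map_pmf snd p) (snd ab)) \<le> 0" if "ab \<in> set_pmf p" for ab
  proof -
    have "0 < pmf p ab" using that by (simp add: pmf_positive)
    moreover have "pmf p ab \<le> pmf (map_pmf snd p) (snd ab)"
      using pmf_le_pmf_map_snd[of p "fst ab" "snd ab"] by simp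
    ultimately show ?thesis by (simp add: mult_nonneg_nonpos)
  qed
  then show ?thesis unfolding cond_entropy_def by (simp add: sum_nonpos)
qed

lemma cond_entropy_le_map_snd:
  fixes p :: "('a \<times> 'b) pmf" and f :: "'b \<Rightarrow> 'c"
  assumes fin: "finite (set_pmf p)"
  shows "cond_entropy p \<le> cond_entropy (map_pmf (\<lambda>(a, b). (a, f b)) p)"
proof -
  define g :: "'a \<times> 'b \<Rightarrow> 'a \<times> 'c" where "g = (\<lambda>(a, b). (a, f b))"
  define q where "q = map_pmf g p"
  define pm where "pm = map_pmf snd p"
  define qm where "qm = map_pmf snd q"
  have set_q: "set_pmf q = g ` set_pmf p" unfolding q_def by simp
  have fin_q: "finite (set_pmf q)" and fin_pm: "finite (set_pmf pm)"
    using fin by (simp_all add: set_q pm_def)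
  have qm: "qm = map_pmf f pm"
    by (simp add: qm_def pm_def q_def pmf.map_comp g_def o_def case_prod_beta)
  define t where "t ab = pmf p ab * log 2 (pmf p ab / pmf pm (snd ab))" for ab
  have "pmf q ac * log 2 (pmf q ac / pmf qm (snd ac)) \<le> sum t {ab \<in> set_pmf p. g ab = ac}"
    if "ac \<in> set_pmf q" for ac
  proof -
    define F where "F = {ab \<in> set_pmf p. g ab = ac}"
    have "finite F" "F \<noteq> {}" unfolding F_def using fin that set_q by auto
    have sum_F: "sum (pmf p) F = pmf q ac"
      unfolding q_def pmf_map measure_pmf_finite_support[OF fin] F_def by (intro sum.cong) auto
    have "fst ab = fst ac" if "ab \<in> F" for ab
      using that by (auto simp: F_def g_def split: prod.splits)
    then have "inj_on snd F"
      by (intro inj_onI) (metis prod.expand)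
    then have "(\<Sum>ab\<in>F. pmf pm (snd ab)) = (\<Sum>b\<in>snd ` F. pmf pm b)"
      by (simp add: sum.reindex)
    also have "\<dots> \<le> (\<Sum>b\<in>set_pmf pm \<inter> f -` {snd ac}. pmf pm b)"
      using fin_pm by (intro sum_mono2) (force simp: F_def pm_def g_def split: prod.splits)+
    also have "\<dots> = pmf qm (snd ac)"
      unfolding qm pmf_map measure_pmf_finite_support[OF fin_pm] by (intro sum.cong) auto
    finally have bound: "(\<Sum>ab\<in>F. pmf pm (snd ab)) \<le> pmf qm (snd ac)" .
    have pos: "0 < pmf p ab \<and> 0 < pmf pm (snd ab)" if "ab \<in> F" for ab
    proof -
      have "0 < pmf p ab" using that by (simp add: F_def pmf_positive)
      moreover have "pmf p ab \<le> pmf pm (snd ab)"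
        using pmf_le_pmf_map_snd[of p "fst ab" "snd ab"] by (simp add: pm_def)
      ultimately show ?thesis by simp
    qed
    have "pmf q ac * log 2 (pmf q ac / pmf qm (snd ac))
        \<le> (\<Sum>ab\<in>F. pmf p ab * log 2 (pmf p ab / pmf pm (snd ab)))"
      using log_sum_inequality[OF \<open>finite F\<close> \<open>F \<noteq> {}\<close> pos bound] unfolding sum_F .
    then show ?thesis unfolding t_def F_def .
  qed
  then have "(\<Sum>ac\<in>set_pmf q. pmf q ac * log 2 (pmf q ac / pmf qm (snd ac)))
      \<le> (\<Sum>ac\<in>set_pmf q. sum t {ab \<in> set_pmf p. g ab = ac})"
    by (rule sum_mono)
  also have "\<dots> = sum t (set_pmf p)"
    by (rule sum.group[OF fin fin_q]) (simp add: set_q)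
  finally show ?thesis unfolding cond_entropy_def t_def q_def qm_def pm_def g_def by simp
qed

lemma cond_entropy_bind_ge:
  fixes w :: "'t pmf" and P :: "'t \<Rightarrow> ('a \<times> 'b) pmf"
  assumes fin_w: "finite (set_pmf w)" and fin_P: "\<And>t. t \<in> set_pmf w \<Longrightarrow> finite (set_pmf (P t))"
  shows "(\<Sum>t\<in>set_pmf w. pmf w t * cond_entropy (P t)) \<le> cond_entropy (bind_pmf w P)"
proof -
  define W where "W = set_pmf w"
  define q where "q = bind_pmf w P"
  define Pm where "Pm t = map_pmf snd (P t)" for t
  define qm where "qm = map_pmf snd q"
  define h where "h t x = pmf w t * pmf (P t) x * log 2 (pmf (P t) x / pmf (Pm t) (snd x))" for t x
  have set_q: "set_pmf q = (\<Union>t\<in>W. set_pmf (P t))" unfolding q_def W_def by simp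
  have "finite W" "finite (set_pmf q)" using fin_w fin_P by (auto simp: W_def set_q)
  have pmf_q: "pmf q x = (\<Sum>t\<in>W. pmf w t * pmf (P t) x)" for x
    unfolding q_def W_def by (rule pmf_bind_finite_support[OF fin_w])
  have pmf_qm: "pmf qm y = (\<Sum>t\<in>W. pmf w t * pmf (Pm t) y)" for y
    unfolding qm_def q_def Pm_def W_def map_bind_pmf by (rule pmf_bind_finite_support[OF fin_w])
  have "(\<Sum>t\<in>W. pmf w t * cond_entropy (P t)) = - (\<Sum>t\<in>W. \<Sum>x\<in>set_pmf (P t). h t x)"
    unfolding cond_entropy_def h_def Pm_def by (simp add: sum_distrib_left sum_negf mult.assoc)
  also have "(\<Sum>t\<in>W. \<Sum>x\<in>set_pmf (P t). h t x) = (\<Sum>t\<in>W. \<Sum>x\<in>{x\<in>set_pmf q. x \<in> set_pmf (P t)}. h t x)"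
    by (intro sum.cong refl) (auto simp: set_q)
  also have "\<dots> = (\<Sum>x\<in>set_pmf q. \<Sum>t\<in>{t\<in>W. x \<in> set_pmf (P t)}. h t x)"
    using \<open>finite W\<close> \<open>finite (set_pmf q)\<close> by (rule sum.swap_restrict)
  finally have avg: "(\<Sum>t\<in>W. pmf w t * cond_entropy (P t))
      = - (\<Sum>x\<in>set_pmf q. \<Sum>t\<in>{t\<in>W. x \<in> set_pmf (P t)}. h t x)" .
  have "pmf q x * log 2 (pmf q x / pmf qm (snd x)) \<le> (\<Sum>t\<in>{t\<in>W. x \<in> set_pmf (P t)}. h t x)"
    if "x \<in> set_pmf q" for x
  proof -
    define I where "I = {t\<in>W. x \<in> set_pmf (P t)}"
    define a where "a t = pmf w t * pmf (P t) x" for t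
    define b where "b t = pmf w t * pmf (Pm t) (snd x)" for t
    have "finite I" "I \<noteq> {}" using \<open>finite W\<close> that by (auto simp: I_def set_q)
    have pos: "0 < a t \<and> 0 < b t" if "t \<in> I" for t
    proof -
      have "0 < pmf w t" "0 < pmf (P t) x" using that by (simp_all add: I_def W_def pmf_positive)
      moreover have "pmf (P t) x \<le> pmf (Pm t) (snd x)"
        using pmf_le_pmf_map_snd[of "P t" "fst x" "snd x"] by (simp add: Pm_def)
      ultimately show ?thesis by (simp add: a_def b_def)
    qed
    have sum_a: "sum a I = pmf q x"
      unfolding pmf_q a_def I_def using \<open>finite W\<close> by (intro sum.mono_neutral_left) (auto simp: set_pmf_eq)
    have bound: "sum b I \<le> pmf qm (snd x)"
      unfolding pmf_qm b_def using \<open>finite W\<close> by (intro sum_mono2) (auto simp: I_def)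
    have "pmf q x * log 2 (pmf q x / pmf qm (snd x)) \<le> (\<Sum>t\<in>I. a t * log 2 (a t / b t))"
      using log_sum_inequality[OF \<open>finite I\<close> \<open>I \<noteq> {}\<close> pos bound] unfolding sum_a .
    also have "\<dots> = (\<Sum>t\<in>I. h t x)"
      using pos by (intro sum.cong) (simp_all add: a_def b_def h_def)
    finally show ?thesis unfolding I_def .
  qed
  then have "- (\<Sum>x\<in>set_pmf q. \<Sum>t\<in>{t\<in>W. x \<in> set_pmf (P t)}. h t x) \<le> cond_entropy q"
    unfolding cond_entropy_def qm_def by (simp add: sum_mono)
  then show ?thesis using avg unfolding W_def q_def by simp
qed

section \<open>Random sets of coordinates\<close>

primrec bernoulli_subset_pmf :: "real \<Rightarrow> nat \<Rightarrow> nat set pmf" where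
  "bernoulli_subset_pmf a 0 = return_pmf {}"
| "bernoulli_subset_pmf a (Suc n) = do {
     k \<leftarrow> bernoulli_pmf a; T \<leftarrow> bernoulli_subset_pmf a n;
     return_pmf (if k then insert 0 (Suc ` T) else Suc ` T) }"

definition indicator_word :: "nat \<Rightarrow> nat set \<Rightarrow> bool list" where
  "indicator_word n T = map (\<lambda>i. i \<in> T) [0..<n]"

lemma length_indicator_word [simp]: "length (indicator_word n T) = n"
  by (simp add: indicator_word_def)

lemma weight_indicator_word: "T \<subseteq> {..<n} \<Longrightarrow> weight (indicator_word n T) = card T"
  unfolding weight_def indicator_word_def by (intro arg_cong[where f = card]) auto

lemma view_Cons:
  "view (insert 0 (Suc ` T)) (b # xs) = Some b # view T xs"
  "view (Suc ` T) (b # xs) = None # view T xs"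
  unfolding view_def by (auto simp: upt_conv_Cons map_Suc_upt[symmetric] image_iff simp del: upt_Suc)

lemma indicator_word_Suc:
  "indicator_word (Suc n) (insert 0 (Suc ` T)) = True # indicator_word n T"
  "indicator_word (Suc n) (Suc ` T) = False # indicator_word n T"
  unfolding indicator_word_def by (auto simp: upt_conv_Cons map_Suc_upt[symmetric] image_iff simp del: upt_Suc)

lemma bec_pmf_eq_map_view: "bec_pmf a x = map_pmf (\<lambda>T. view T x) (bernoulli_subset_pmf a (length x))"
proof (induction x)
  case Nil
  then show ?case by (simp add: view_def)
next
  case (Cons b xs)
  show ?case
    unfolding bec_pmf.simps bernoulli_subset_pmf.simps map_bind_pmf Cons.IH length_Cons bind_map_pmf
    by (intro bind_pmf_cong refl) (simp add: view_Cons)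
qed

lemma bsc_pmf_eq_map_xor:
  "bsc_pmf p x = map_pmf (\<lambda>T. xor_word x (indicator_word (length x) T)) (bernoulli_subset_pmf p (length x))"
proof (induction x)
  case Nil
  then show ?case by (simp add: indicator_word_def xor_word_def)
next
  case (Cons b xs)
  show ?case
    unfolding bsc_pmf.simps bernoulli_subset_pmf.simps map_bind_pmf Cons.IH length_Cons bind_map_pmf
    by (intro bind_pmf_cong refl) (auto simp: indicator_word_Suc xor_word_def)
qed

lemma set_bernoulli_subset_pmf: "T \<in> set_pmf (bernoulli_subset_pmf a n) \<Longrightarrow> T \<subseteq> {..<n}"
  by (induction n arbitrary: T) (auto split: if_splits)

lemma finite_set_bernoulli_subset_pmf: "finite (set_pmf (bernoulli_subset_pmf a n))"
  by (rule finite_subset[of _ "Pow {..<n}"]) (auto dest: set_bernoulli_subset_pmf)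

lemma map_card_bernoulli_subset_pmf:
  assumes "a \<in> {0..1}"
  shows "map_pmf card (bernoulli_subset_pmf a n) = binomial_pmf n a"
proof (induction n)
  case 0
  then show ?case using assms by (simp add: binomial_pmf_0)
next
  case (Suc n)
  have "map_pmf card (bernoulli_subset_pmf a (Suc n)) = do {
      k \<leftarrow> bernoulli_pmf a; T \<leftarrow> bernoulli_subset_pmf a n; return_pmf ((if k then 1 else 0) + card T) }"
    unfolding bernoulli_subset_pmf.simps map_bind_pmf
  proof (intro bind_pmf_cong refl)
    fix k T assume "T \<in> set_pmf (bernoulli_subset_pmf a n)"
    then have "finite T" by (meson set_bernoulli_subset_pmf finite_lessThan finite_subset)
    then show "map_pmf card (return_pmf (if k then insert 0 (Suc ` T) else Suc ` T))
        = return_pmf ((if k then 1 else 0) + card T)"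
      by (simp add: card_image)
  qed
  also have "\<dots> = do {
      k \<leftarrow> bernoulli_pmf a; j \<leftarrow> map_pmf card (bernoulli_subset_pmf a n); return_pmf ((if k then 1 else 0) + j) }"
    by (simp add: bind_map_pmf)
  also have "\<dots> = binomial_pmf (Suc n) a"
    using assms by (simp add: Suc.IH binomial_pmf_Suc)
  finally show ?case .
qed

lemma bernoulli_subset_pmf_tail:
  assumes "a \<in> {0..1}" "a \<le> \<rho>" "0 < n"
  shows "measure_pmf.prob (bernoulli_subset_pmf a n) {T. \<rho> * real n < real (card T)}
           \<le> exp (- 2 * real n * (\<rho> - a)\<^sup>2)"
proof -
  interpret binomial_distribution n a using assms by unfold_locales simp
  have "measure_pmf.prob (bernoulli_subset_pmf a n) {T. \<rho> * real n < real (card T)}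
      = measure_pmf.prob (binomial_pmf n a) {k. \<rho> * real n < real k}"
    by (simp add: measure_map_pmf vimage_def flip: map_card_bernoulli_subset_pmf[OF \<open>a \<in> {0..1}\<close>])
  also have "\<dots> \<le> measure_pmf.prob (binomial_pmf n a) {k. real k / real n \<ge> a + (\<rho> - a)}"
    using assms by (intro measure_pmf.finite_measure_mono) (auto simp: pos_le_divide_eq)
  also have "\<dots> \<le> exp (- 2 * real n * (\<rho> - a)\<^sup>2)"
    using prob_ge'[of "\<rho> - a"] assms by simp
  finally show ?thesis .
qed

section \<open>From the adversarial to the random wiretap channel\<close>

lemma set_msg_pmf: "1 \<le> K \<Longrightarrow> set_pmf (msg_pmf K) = {..<K}"
  unfolding msg_pmf_def by (subst set_pmf_of_set) (auto simp: lessThan_empty_iff)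

lemma length_codeword:
  "is_code n K enc \<Longrightarrow> m \<in> set_pmf (msg_pmf K) \<Longrightarrow> x \<in> set_pmf (enc m) \<Longrightarrow> length x = n"
  unfolding is_code_def by (auto simp: set_msg_pmf)

lemma finite_set_adv_view_joint:
  assumes "is_code n K enc"
  shows "finite (set_pmf (adv_view_joint K enc S))"
proof (rule finite_subset)
  show "set_pmf (adv_view_joint K enc S) \<subseteq> {..<K} \<times> view S ` {x. length x = n}"
    using assms unfolding adv_view_joint_def is_code_def by (auto simp: set_msg_pmf)
  show "finite ({..<K} \<times> view S ` {x :: bool list. length x = n})"
    using finite_lists_length_eq[of "UNIV :: bool set" n] by simp
qed

definition mask :: "nat set \<Rightarrow> bool option list \<Rightarrow> bool option list" where
  "mask T v = map (\<lambda>i. if i \<in> T then v ! i else None) [0..<length v]"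

lemma mask_view: "T \<subseteq> S \<Longrightarrow> mask T (view S x) = view T x"
  unfolding mask_def view_def by auto

lemma adv_view_joint_mask:
  "T \<subseteq> S \<Longrightarrow> adv_view_joint K enc T = map_pmf (\<lambda>(m, v). (m, mask T v)) (adv_view_joint K enc S)"
  unfolding adv_view_joint_def by (simp add: map_bind_pmf mask_view)

lemma nat_floor_mult_le: "\<rho> \<le> 1 \<Longrightarrow> nat \<lfloor>\<rho> * real n\<rfloor> \<le> n"
  using mult_right_mono[of \<rho> 1 "real n"] by linarith

lemma finite_adv_equivocation_candidates:
  "finite {cond_entropy (adv_view_joint K enc S) | S. S \<subseteq> {..<n} \<and> card S = k}"
  by (rule finite_subset[of _ "(\<lambda>S. cond_entropy (adv_view_joint K enc S)) ` Pow {..<n}"]) auto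

lemma adv_equivocation_le:
  "S \<subseteq> {..<n} \<Longrightarrow> card S = nat \<lfloor>\<rho> * real n\<rfloor> \<Longrightarrow>
     adv_equivocation \<rho> n K enc \<le> cond_entropy (adv_view_joint K enc S)"
  unfolding adv_equivocation_def by (intro Min_le finite_adv_equivocation_candidates) auto

lemma adv_equivocation_nonneg:
  assumes "is_code n K enc" "\<rho> \<le> 1"
  shows "0 \<le> adv_equivocation \<rho> n K enc"
proof -
  let ?E = "{cond_entropy (adv_view_joint K enc S) | S. S \<subseteq> {..<n} \<and> card S = nat \<lfloor>\<rho> * real n\<rfloor>}"
  have "{..<nat \<lfloor>\<rho> * real n\<rfloor>} \<subseteq> {..<n}" using nat_floor_mult_le[OF assms(2)] by auto
  then have "cond_entropy (adv_view_joint K enc {..<nat \<lfloor>\<rho> * real n\<rfloor>}) \<in> ?E" by auto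
  then have "Min ?E \<in> ?E" by (intro Min_in finite_adv_equivocation_candidates) blast
  then obtain S where "adv_equivocation \<rho> n K enc = cond_entropy (adv_view_joint K enc S)"
    unfolding adv_equivocation_def by blast
  then show ?thesis using cond_entropy_nonneg[OF finite_set_adv_view_joint[OF assms(1)]] by simp
qed

text \<open>A read set below the budget is enlarged to one of exactly the budget; the smaller
  view is a function of the larger one.\<close>

lemma adv_equivocation_le_subset:
  assumes code: "is_code n K enc" and "\<rho> \<le> 1"
    and T: "T \<subseteq> {..<n}" "real (card T) \<le> \<rho> * real n"
  shows "adv_equivocation \<rho> n K enc \<le> cond_entropy (adv_view_joint K enc T)"
proof -
  define k where "k = nat \<lfloor>\<rho> * real n\<rfloor>"
  have "card T \<le> k" using T(2) unfolding k_def by linarith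
  have "finite T" using T(1) by (meson finite_lessThan finite_subset)
  have "k - card T \<le> card ({..<n} - T)"
    using T(1) nat_floor_mult_le[OF \<open>\<rho> \<le> 1\<close>, of n] by (simp add: card_Diff_subset \<open>finite T\<close> k_def)
  then obtain U where U: "U \<subseteq> {..<n} - T" "card U = k - card T"
    by (meson obtain_subset_with_card_n)
  then have "finite U" by (meson finite_Diff finite_lessThan finite_subset)
  have "T \<inter> U = {}" using U(1) by blast
  then have "card (T \<union> U) = k"
    using U(2) \<open>card T \<le> k\<close> \<open>finite T\<close> \<open>finite U\<close> by (simp add: card_Un_disjoint)
  moreover have "T \<union> U \<subseteq> {..<n}" using T(1) U(1) by blast
  ultimately have "adv_equivocation \<rho> n K enc \<le> cond_entropy (adv_view_joint K enc (T \<union> U))"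
    unfolding k_def by (intro adv_equivocation_le)
  also have "\<dots> \<le> cond_entropy (adv_view_joint K enc T)"
    unfolding adv_view_joint_mask[OF Un_upper1[of T U]]
    by (intro cond_entropy_le_map_snd finite_set_adv_view_joint[OF code])
  finally show ?thesis .
qed

lemma rand_equivocation_eq_bind:
  assumes "is_code n K enc"
  shows "rand_equivocation K enc a = cond_entropy (bernoulli_subset_pmf a n \<bind> adv_view_joint K enc)"
proof -
  have "do { m \<leftarrow> msg_pmf K; x \<leftarrow> enc m; z \<leftarrow> bec_pmf a x; return_pmf (m, z) }
      = do { m \<leftarrow> msg_pmf K; x \<leftarrow> enc m; T \<leftarrow> bernoulli_subset_pmf a n; return_pmf (m, view T x) }"
    using assms
    by (intro bind_pmf_cong refl) (simp add: bec_pmf_eq_map_view length_codeword bind_map_pmf)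
  also have "\<dots> = bernoulli_subset_pmf a n \<bind> adv_view_joint K enc"
    unfolding adv_view_joint_def by (simp add: bind_commute_pmf[of "bernoulli_subset_pmf a n"])
  finally show ?thesis unfolding rand_equivocation_def by simp
qed

lemma adv_equivocation_le_rand_equivocation:
  assumes code: "is_code n K enc" and "\<rho> \<le> 1"
  shows "adv_equivocation \<rho> n K enc
           * (1 - measure_pmf.prob (bernoulli_subset_pmf a n) {T. \<rho> * real n < real (card T)})
         \<le> rand_equivocation K enc a"
proof -
  define w where "w = bernoulli_subset_pmf a n"
  define J where "J = adv_view_joint K enc"
  define adv where "adv = adv_equivocation \<rho> n K enc"
  define light :: "nat set set" where "light = {T. real (card T) \<le> \<rho> * real n}"
  have fin_w: "finite (set_pmf w)" unfolding w_def by (rule finite_set_bernoulli_subset_pmf)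
  have "- light = {T. \<rho> * real n < real (card T)}" by (auto simp: light_def)
  then have "1 - measure_pmf.prob w {T. \<rho> * real n < real (card T)} = measure_pmf.prob w light"
    using measure_pmf.prob_compl[of light w] by (simp add: Compl_eq_Diff_UNIV)
  then have "adv * (1 - measure_pmf.prob w {T. \<rho> * real n < real (card T)})
      = adv * measure_pmf.prob w light" by simp
  also have "\<dots> = (\<Sum>T\<in>set_pmf w. pmf w T * (if T \<in> light then adv else 0))"
    unfolding measure_pmf_finite_support[OF fin_w] sum_distrib_left
    by (rule sum.mono_neutral_cong_left[OF fin_w]) auto
  also have "\<dots> \<le> (\<Sum>T\<in>set_pmf w. pmf w T * cond_entropy (J T))"
  proof (intro sum_mono mult_left_mono)
    fix T assume "T \<in> set_pmf w"
    then have "T \<subseteq> {..<n}" unfolding w_def by (rule set_bernoulli_subset_pmf)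
    then show "(if T \<in> light then adv else 0) \<le> cond_entropy (J T)"
      using adv_equivocation_le_subset[OF code \<open>\<rho> \<le> 1\<close>] cond_entropy_nonneg[OF finite_set_adv_view_joint[OF code]]
      by (simp add: light_def adv_def J_def)
  qed simp
  also have "\<dots> \<le> rand_equivocation K enc a"
    unfolding rand_equivocation_eq_bind[OF code] J_def w_def
    by (intro cond_entropy_bind_ge finite_set_bernoulli_subset_pmf finite_set_adv_view_joint[OF code])
  finally show ?thesis unfolding adv_def w_def .
qed

text \<open>The adversary ignores its view and applies the BSC error pattern, suppressed when it
  exceeds the weight budget; the two channels then behave identically unless the pattern is heavy.\<close>

lemma rand_error_le_adv_error:
  assumes code: "is_code n K enc" and "\<rho>r \<le> 1" "0 \<le> \<rho>w"
    and adv: "\<And>S err. adv_strategy \<rho>r \<rho>w n S err \<Longrightarrow> adv_error K enc dec S err \<le> \<delta>"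
  shows "rand_error K enc dec b
           \<le> \<delta> + measure_pmf.prob (bernoulli_subset_pmf b n) {T. \<rho>w * real n < real (card T)}"
proof -
  define W where "W = bernoulli_subset_pmf b n"
  define heavy :: "nat set set" where "heavy = {T. \<rho>w * real n < real (card T)}"
  define trunc where "trunc T = (if T \<in> heavy then {} else T)" for T :: "nat set"
  define err where "err v = map_pmf (\<lambda>T. indicator_word n (trunc T)) W" for v :: "bool option list"
  define S where "S = {..<nat \<lfloor>\<rho>r * real n\<rfloor>}"
  define P where "P = do { m \<leftarrow> msg_pmf K; x \<leftarrow> enc m; T \<leftarrow> W; return_pmf (m, x, T) }"
  define wrong where "wrong f = {(m, x, T). dec (xor_word x (indicator_word n (f T))) \<noteq> m}"
    for f :: "nat set \<Rightarrow> nat set"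
  have "adv_strategy \<rho>r \<rho>w n S err"
    unfolding adv_strategy_def
  proof (intro conjI allI ballI)
    show "S \<subseteq> {..<n}" using nat_floor_mult_le[OF \<open>\<rho>r \<le> 1\<close>] by (auto simp: S_def)
    fix v e assume "e \<in> set_pmf (err v)"
    then obtain T where "T \<in> set_pmf W" "e = indicator_word n (trunc T)" by (auto simp: err_def)
    moreover from this have "trunc T \<subseteq> {..<n}"
      by (auto simp: trunc_def W_def dest: set_bernoulli_subset_pmf)
    ultimately show "length e = n" "real (weight e) \<le> \<rho>w * real n"
      using \<open>0 \<le> \<rho>w\<close> by (auto simp: weight_indicator_word trunc_def heavy_def)
  qed (simp add: S_def)
  have prob_wrong: "measure_pmf.prob
      (do { m \<leftarrow> msg_pmf K; x \<leftarrow> enc m; T \<leftarrow> W; return_pmf (m, dec (xor_word x (indicator_word n (f T)))) })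
      {(m, m'). m' \<noteq> m} = measure_pmf.prob P (wrong f)" for f
  proof -
    have "do { m \<leftarrow> msg_pmf K; x \<leftarrow> enc m; T \<leftarrow> W; return_pmf (m, dec (xor_word x (indicator_word n (f T)))) }
        = map_pmf (\<lambda>(m, x, T). (m, dec (xor_word x (indicator_word n (f T))))) P"
      by (simp add: P_def map_bind_pmf)
    then show ?thesis by (simp add: measure_map_pmf vimage_def wrong_def case_prod_unfold)
  qed
  have "adv_error K enc dec S err = measure_pmf.prob P (wrong trunc)"
    unfolding adv_error_def err_def prob_wrong[symmetric] by (simp add: bind_map_pmf)
  with adv[OF \<open>adv_strategy \<rho>r \<rho>w n S err\<close>] have "measure_pmf.prob P (wrong trunc) \<le> \<delta>" by simp
  have "rand_error K enc dec b = measure_pmf.prob P (wrong id)"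
    unfolding rand_error_def prob_wrong[symmetric] using code
    by (intro arg_cong2[where f = measure_pmf.prob] bind_pmf_cong refl)
       (simp_all add: bsc_pmf_eq_map_xor length_codeword bind_map_pmf W_def)
  also have "\<dots> \<le> measure_pmf.prob P (wrong trunc \<union> UNIV \<times> UNIV \<times> heavy)"
    by (intro measure_pmf.finite_measure_mono) (auto simp: wrong_def trunc_def)
  also have "\<dots> \<le> measure_pmf.prob P (wrong trunc) + measure_pmf.prob P (UNIV \<times> UNIV \<times> heavy)"
    by (rule measure_subadditive) auto
  also have "measure_pmf.prob P (UNIV \<times> UNIV \<times> heavy) = measure_pmf.prob W heavy"
  proof -
    have "map_pmf (snd \<circ> snd) P = W" by (simp add: P_def map_bind_pmf bind_return_pmf' bind_pmf_const)
    moreover have "UNIV \<times> UNIV \<times> heavy = (snd \<circ> snd) -` heavy" by auto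
    ultimately show ?thesis by (metis measure_map_pmf)
  qed
  finally show ?thesis using \<open>measure_pmf.prob P (wrong trunc) \<le> \<delta>\<close> by (simp add: W_def heavy_def)
qed

lemma random_wiretap_bounds:
  assumes code: "is_code n K enc" and "0 < n"
    and \<xi>: "0 \<le> \<xi>" "\<xi> \<le> \<rho>r" "\<xi> \<le> \<rho>w" and "\<rho>r \<le> 1" "\<rho>w \<le> 1"
    and adv: "\<And>S err. adv_strategy \<rho>r \<rho>w n S err \<Longrightarrow> adv_error K enc dec S err \<le> \<delta>"
  shows "rand_error K enc dec (\<rho>w - \<xi>) \<le> \<delta> + exp (- (2 * \<xi>\<^sup>2) * real n)"
    and "adv_equivocation \<rho>r n K enc / real n * (1 - exp (- (2 * \<xi>\<^sup>2) * real n))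
           \<le> rand_equivocation K enc (\<rho>r - \<xi>) / real n"
proof -
  define e where "e = exp (- (2 * \<xi>\<^sup>2) * real n)"
  have tail: "measure_pmf.prob (bernoulli_subset_pmf (\<rho> - \<xi>) n) {T. \<rho> * real n < real (card T)} \<le> e"
    if "\<xi> \<le> \<rho>" "\<rho> \<le> 1" for \<rho>
    using bernoulli_subset_pmf_tail[of "\<rho> - \<xi>" \<rho> n] that \<xi> \<open>0 < n\<close> by (simp add: e_def mult_ac)
  have "rand_error K enc dec (\<rho>w - \<xi>)
      \<le> \<delta> + measure_pmf.prob (bernoulli_subset_pmf (\<rho>w - \<xi>) n) {T. \<rho>w * real n < real (card T)}"
    using adv \<xi> \<open>\<rho>r \<le> 1\<close> by (intro rand_error_le_adv_error[OF code]) auto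
  also have "\<dots> \<le> \<delta> + e"
    using tail \<xi> \<open>\<rho>w \<le> 1\<close> by simp
  finally show "rand_error K enc dec (\<rho>w - \<xi>) \<le> \<delta> + exp (- (2 * \<xi>\<^sup>2) * real n)"
    unfolding e_def .
  have "adv_equivocation \<rho>r n K enc * (1 - e)
      \<le> adv_equivocation \<rho>r n K enc
         * (1 - measure_pmf.prob (bernoulli_subset_pmf (\<rho>r - \<xi>) n) {T. \<rho>r * real n < real (card T)})"
    using tail \<xi> adv_equivocation_nonneg[OF code \<open>\<rho>r \<le> 1\<close>] \<open>\<rho>r \<le> 1\<close>
    by (intro mult_left_mono) auto
  also have "\<dots> \<le> rand_equivocation K enc (\<rho>r - \<xi>)"
    by (rule adv_equivocation_le_rand_equivocation[OF code \<open>\<rho>r \<le> 1\<close>])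
  finally show "adv_equivocation \<rho>r n K enc / real n * (1 - exp (- (2 * \<xi>\<^sup>2) * real n))
      \<le> rand_equivocation K enc (\<rho>r - \<xi>) / real n"
    unfolding e_def by (simp add: divide_right_mono)
qed

theorem theorem3p2:
  fixes \<rho>r \<rho>w :: real
  assumes "0 < \<rho>r" "\<rho>r < 1" "0 < \<rho>w" "\<rho>w < 1/2"
  shows "\<exists>\<xi>0>0. \<forall>\<xi>. 0 < \<xi> \<and> \<xi> < \<xi>0 \<longrightarrow>
           (\<exists>c>0. \<exists>N. \<forall>n\<ge>N. \<forall>K enc dec \<delta>.
              is_code n K enc \<and> nn_decoder n K enc dec \<and>
              (\<forall>S err. adv_strategy \<rho>r \<rho>w n S err \<longrightarrow> adv_error K enc dec S err \<le> \<delta>) \<longrightarrow>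
                rand_error K enc dec (\<rho>w - \<xi>) \<le> \<delta> + exp (- c * real n) \<and>
                rand_equivocation K enc (\<rho>r - \<xi>) / real n \<ge>
                  (adv_equivocation \<rho>r n K enc / real n) * (1 - exp (- c * real n)))"
proof (rule exI[of _ "min \<rho>r \<rho>w"], intro conjI allI impI)
  fix \<xi> :: real assume \<xi>: "0 < \<xi> \<and> \<xi> < min \<rho>r \<rho>w"
  have "rand_error K enc dec (\<rho>w - \<xi>) \<le> \<delta> + exp (- (2 * \<xi>\<^sup>2) * real n) \<and>
      adv_equivocation \<rho>r n K enc / real n * (1 - exp (- (2 * \<xi>\<^sup>2) * real n))
        \<le> rand_equivocation K enc (\<rho>r - \<xi>) / real n"
    if "1 \<le> n" "is_code n K enc"
      "\<forall>S err. adv_strategy \<rho>r \<rho>w n S err \<longrightarrow> adv_error K enc dec S err \<le> \<delta>"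
    for n K enc dec \<delta>
    using that \<xi> assms
    by (intro conjI random_wiretap_bounds[where \<rho>r = \<rho>r and \<rho>w = \<rho>w and dec = dec and \<delta> = \<delta>]) auto
  moreover have "0 < 2 * \<xi>\<^sup>2" using \<xi> by simp
  ultimately show "\<exists>c>0. \<exists>N. \<forall>n\<ge>N. \<forall>K enc dec \<delta>.
      is_code n K enc \<and> nn_decoder n K enc dec \<and>
      (\<forall>S err. adv_strategy \<rho>r \<rho>w n S err \<longrightarrow> adv_error K enc dec S err \<le> \<delta>) \<longrightarrow>
        rand_error K enc dec (\<rho>w - \<xi>) \<le> \<delta> + exp (- c * real n) \<and>
        rand_equivocation K enc (\<rho>r - \<xi>) / real n \<ge>
          (adv_equivocation \<rho>r n K enc / real n) * (1 - exp (- c * real n))"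
    by blast
qed (use assms in simp)

end
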